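(* Let $T=2^m$, $d\ge1$, $u_{1:T}\in(\mathbb{R}^d)^T$, $\bar u=\frac1T\sum_{t=1}^Tu_t$, and $\bar S=\sum_{t=1}^T\|u_t-\bar u\|_2$. Then for every scale $j^*\in[1:m]$, $\bar S^{(j^* )}\le\bar S$, where $\bar S^{(j^* )}$ is defined in the context.
   Context: Haar features for $T=2^m$: for scale $j\in[1:m]$ and location $l\in[1:2^{-j}T]$, $h^{(j,l)}\in\mathbb{R}^T$ has $t$-th entry $1$ for $t\in[2^j(l-1)+1:2^j(l-1)+2^{j-1}]$, $-1$ for $t\in[2^j(l-1)+2^{j-1}+1:2^jl]$, and $0$ otherwise; normalized $\tilde h^{(j,l)}=2^{-j/2}h^{(j,l)}$. For $i\in[1:d]$, $u^{(i)}_{1:T}\in\mathbb{R}^T$ is the sequence of $i$-th coordinates of $u_1,\ldots,u_T$. Coefficient $\hat u^{(j,l)}\in\mathbb{R}^d$ has $i$-th entry $\langle\tilde h^{(j,l)},u^{(i)}_{1:T}\rangle$. Detail sequences: $z^{(j,l)}_t=\hat u^{(j,l)}\tilde h^{(j,l)}_t$, $z^{(j)}=\sum_l z^{(j,l)}$, and $\bar S^{(j)}=\sum_{t=1}^T\|z^{(j)}_t\|_2$. *)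

theory Defs
  imports "HOL-Analysis.Analysis"
begin

text \<open>Vectors in R^d are rendered as real^'d (Euclidean norm). Sequences u_1..u_T
  are functions nat => real^'d, only values at t in {1..T} matter.\<close>

definition haar :: "nat \<Rightarrow> nat \<Rightarrow> nat \<Rightarrow> real" where
  "haar j l t =
     (if 2^j * (l - 1) + 1 \<le> t \<and> t \<le> 2^j * (l - 1) + 2^(j - 1) then 1
      else if 2^j * (l - 1) + 2^(j - 1) + 1 \<le> t \<and> t \<le> 2^j * l then -1
      else 0)"

definition haar_norm :: "nat \<Rightarrow> nat \<Rightarrow> nat \<Rightarrow> real" where
  "haar_norm j l t = 2 powr (- real j / 2) * haar j l t"

definition haar_coef :: "nat \<Rightarrow> (nat \<Rightarrow> real^'d) \<Rightarrow> nat \<Rightarrow> nat \<Rightarrow> real^'d" where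
  "haar_coef T u j l = (\<chi> i. \<Sum>t = 1..T. haar_norm j l t * (u t $ i))"

definition detail_jl :: "nat \<Rightarrow> (nat \<Rightarrow> real^'d) \<Rightarrow> nat \<Rightarrow> nat \<Rightarrow> nat \<Rightarrow> real^'d" where
  "detail_jl T u j l t = haar_norm j l t *\<^sub>R haar_coef T u j l"

definition detail :: "nat \<Rightarrow> (nat \<Rightarrow> real^'d) \<Rightarrow> nat \<Rightarrow> nat \<Rightarrow> real^'d" where
  "detail T u j t = (\<Sum>l = 1..T div 2^j. detail_jl T u j l t)"

definition detail_S :: "nat \<Rightarrow> (nat \<Rightarrow> real^'d) \<Rightarrow> nat \<Rightarrow> real" where
  "detail_S T u j = (\<Sum>t = 1..T. norm (detail T u j t))"

end

theory Submission
  imports Defs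
begin

text \<open>
  Every Haar feature of scale \<open>j \<ge> 1\<close> has mean zero, so the coefficient \<open>\<hat>u^(j,l)\<close> does not
  change when a fixed vector \<open>c\<close> is subtracted from all \<open>u_t\<close>. Hence \<open>\<hat>u^(j,l)\<close> has norm at most
  \<open>2^(-j/2)\<close> times the sum of \<open>\<parallel>u_t - c\<parallel>\<close> over the block \<open>B_l\<close> of length \<open>2^j\<close>, while the
  detail sequence \<open>z^(j,l)\<close> has total norm \<open>2^(j/2) \<parallel>\<hat>u^(j,l)\<parallel>\<close>. As the blocks are disjoint,
  the triangle inequality gives \<open>S^(j) \<le> \<Sum>_t \<parallel>u_t - c\<parallel>\<close> for every \<open>c\<close>, in particular for the mean.
\<close>

lemma abs_haar_le_1: "\<bar>haar j l t\<bar> \<le> 1"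
  by (simp add: haar_def)

lemma haar_nonzero_imp_in_block:
  assumes "1 \<le> l" "haar j l t \<noteq> 0"
  shows "2^j * (l - 1) + 1 \<le> t \<and> t \<le> 2^j * l"
proof -
  have "2^j * (l - 1) + 2^j = (2::nat)^j * l"
    using assms(1) by (cases l) auto
  moreover have "(2::nat)^(j - 1) \<le> 2^j"
    by simp
  ultimately have "2^j * (l - 1) + 2^(j - 1) \<le> (2::nat)^j * l"
    by linarith
  then show ?thesis
    using assms(2) unfolding haar_def by (auto split: if_splits)
qed

lemma haar_nonzero_imp_block_index:
  assumes "1 \<le> l" "haar j l t \<noteq> 0"
  shows "l = (t - 1) div 2^j + 1"
proof -
  have "2^j * (l - 1) \<le> t - 1" "t - 1 < 2^j * (l - 1) + 2^j"
    using haar_nonzero_imp_in_block[OF assms] assms(1) by (auto simp: algebra_simps)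
  then have "(t - 1) div 2^j = l - 1"
    by (simp add: div_nat_eqI mult.commute)
  then show ?thesis
    using assms(1) by simp
qed

lemma sum_abs_haar_le:
  assumes "1 \<le> l" "finite A"
  shows "(\<Sum>t\<in>A. \<bar>haar j l t\<bar>) \<le> 2^j"
proof -
  let ?B = "{2^j * (l - 1) + 1 .. 2^j * l}"
  have "(\<Sum>t\<in>A. \<bar>haar j l t\<bar>) = (\<Sum>t\<in>A \<inter> ?B. \<bar>haar j l t\<bar>)"
    using assms haar_nonzero_imp_in_block[OF assms(1)] by (intro sum.mono_neutral_right) auto
  also have "\<dots> \<le> card (A \<inter> ?B)"
    using sum_mono[of "A \<inter> ?B" "\<lambda>t. \<bar>haar j l t\<bar>" "\<lambda>_. 1"] abs_haar_le_1 by simp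
  also have "\<dots> \<le> card ?B"
    by (intro of_nat_mono card_mono) auto
  also have "card ?B = 2^j"
    using assms(1) by (cases l) auto
  finally show ?thesis
    by simp
qed

lemma sum_haar_eq_0:
  assumes "1 \<le> j" "1 \<le> l" "2^j * l \<le> N"
  shows "(\<Sum>t = 1..N. haar j l t) = 0"
proof -
  define a where "a = 2^j * (l - 1)"
  define h where "h = (2::nat)^(j - 1)"
  have two_h: "(2::nat)^j = 2 * h"
    unfolding h_def using assms(1) by (cases j) auto
  have block_end: "2^j * l = a + 2 * h"
    unfolding a_def using assms(2) by (cases l) (auto simp: two_h[symmetric])
  have haar_eq: "haar j l t = (if a + 1 \<le> t \<and> t \<le> a + h then 1
      else if a + h + 1 \<le> t \<and> t \<le> a + 2 * h then -1 else 0)" for t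
    unfolding haar_def a_def[symmetric] h_def[symmetric] block_end ..
  have "(\<Sum>t = 1..N. haar j l t) = (\<Sum>t\<in>{a + 1..a + h} \<union> {a + h + 1..a + 2 * h}. haar j l t)"
    using assms block_end by (intro sum.mono_neutral_right) (auto simp: haar_eq)
  also have "\<dots> = (\<Sum>t\<in>{a + 1..a + h}. 1) + (\<Sum>t\<in>{a + h + 1..a + 2 * h}. -1)"
    by (subst sum.union_disjoint) (auto intro!: arg_cong2[where f = "(+)"] sum.cong simp: haar_eq)
  finally show ?thesis
    by simp
qed

lemma sum_abs_haar_over_blocks_le_1: "(\<Sum>l = 1..K. \<bar>haar j l t\<bar>) \<le> 1"
proof -
  let ?l = "(t - 1) div 2^j + 1"
  have "(\<Sum>l = 1..K. \<bar>haar j l t\<bar>) = (\<Sum>l\<in>{1..K} \<inter> {?l}. \<bar>haar j l t\<bar>)"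
    using haar_nonzero_imp_block_index by (intro sum.mono_neutral_right) fastforce+
  also have "\<dots> \<le> 1"
    by (cases "?l \<in> {1..K}") (auto simp: abs_haar_le_1)
  finally show ?thesis .
qed

lemma haar_coef_eq:
  "haar_coef T u j l = 2 powr (- real j / 2) *\<^sub>R (\<Sum>t = 1..T. haar j l t *\<^sub>R u t)"
  by (simp add: haar_coef_def haar_norm_def vec_eq_iff sum_component sum_distrib_left mult.assoc)

lemma haar_coef_eq_centered:
  assumes "1 \<le> j" "1 \<le> l" "2^j * l \<le> T"
  shows "haar_coef T u j l = 2 powr (- real j / 2) *\<^sub>R (\<Sum>t = 1..T. haar j l t *\<^sub>R (u t - c))"
proof -
  have "(\<Sum>t = 1..T. haar j l t *\<^sub>R (u t - c))
      = (\<Sum>t = 1..T. haar j l t *\<^sub>R u t) - (\<Sum>t = 1..T. haar j l t) *\<^sub>R c"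
    by (simp add: scaleR_diff_right sum_subtractf scaleR_sum_left)
  then show ?thesis
    unfolding sum_haar_eq_0[OF assms] by (simp add: haar_coef_eq)
qed

lemma sum_norm_detail_jl_le:
  assumes "1 \<le> j" "1 \<le> l" "2^j * l \<le> T"
  shows "(\<Sum>t = 1..T. norm (detail_jl T u j l t)) \<le> (\<Sum>t = 1..T. \<bar>haar j l t\<bar> * norm (u t - c))"
proof -
  define p :: real where "p = 2 powr (- real j / 2)"
  have p_pos: "p > 0"
    by (simp add: p_def)
  have p_sq: "p * 2^j * p = 1"
    by (simp add: p_def powr_add[symmetric] powr_minus powr_realpow field_simps)
  have "(\<Sum>t = 1..T. norm (detail_jl T u j l t))
      = p * (\<Sum>t = 1..T. \<bar>haar j l t\<bar>) * norm (haar_coef T u j l)"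
    by (simp add: detail_jl_def haar_norm_def abs_mult p_def sum_distrib_left sum_distrib_right
        mult.assoc)
  also have "\<dots> \<le> p * 2^j * norm (haar_coef T u j l)"
    using p_pos assms(2) by (intro mult_right_mono mult_left_mono sum_abs_haar_le) auto
  also have "norm (haar_coef T u j l) = p * norm (\<Sum>t = 1..T. haar j l t *\<^sub>R (u t - c))"
    using p_pos by (simp add: haar_coef_eq_centered[OF assms, of u c] p_def)
  also have "norm (\<Sum>t = 1..T. haar j l t *\<^sub>R (u t - c)) \<le> (\<Sum>t = 1..T. \<bar>haar j l t\<bar> * norm (u t - c))"
    by (rule order.trans[OF norm_sum]) simp
  finally show ?thesis
    using p_pos by (simp add: mult.assoc[symmetric] p_sq mult_left_mono)
qed

theorem detail_S_le_sum_norm_diff: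
  assumes "1 \<le> j"
  shows "detail_S T u j \<le> (\<Sum>t = 1..T. norm (u t - c))"
proof -
  let ?K = "T div 2^j"
  have block_le: "2^j * l \<le> T" if "l \<in> {1..?K}" for l
  proof -
    have "2^j * l \<le> 2^j * ?K"
      using that by simp
    also have "\<dots> \<le> T"
      by simp
    finally show ?thesis .
  qed
  have "detail_S T u j \<le> (\<Sum>t = 1..T. \<Sum>l = 1..?K. norm (detail_jl T u j l t))"
    unfolding detail_S_def detail_def by (intro sum_mono norm_sum)
  also have "\<dots> = (\<Sum>l = 1..?K. \<Sum>t = 1..T. norm (detail_jl T u j l t))"
    by (rule sum.swap)
  also have "\<dots> \<le> (\<Sum>l = 1..?K. \<Sum>t = 1..T. \<bar>haar j l t\<bar> * norm (u t - c))"
    using assms block_le by (intro sum_mono sum_norm_detail_jl_le) auto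
  also have "\<dots> = (\<Sum>t = 1..T. (\<Sum>l = 1..?K. \<bar>haar j l t\<bar>) * norm (u t - c))"
    by (subst sum.swap) (simp add: sum_distrib_right)
  also have "\<dots> \<le> (\<Sum>t = 1..T. norm (u t - c))"
    by (intro sum_mono mult_left_le_one_le sum_abs_haar_over_blocks_le_1) auto
  finally show ?thesis .
qed

theorem lemma8:
  fixes m j :: nat and u :: "nat \<Rightarrow> real^'d"
  assumes "1 \<le> j" and "j \<le> m"
  shows "detail_S (2^m) u j
           \<le> (\<Sum>t = 1..2^m. norm (u t - (1 / real (2^m)) *\<^sub>R (\<Sum>s = 1..2^m. u s)))"
  using detail_S_le_sum_norm_diff[OF assms(1)] .

end
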